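(* Let $0<\alpha<1$, $T>0$, $y\in C^2[0,T]$, and $x\in(0,T]$. For an integer $N\ge 2$ put $h=T/N$ and suppose $n=x/h$ is an integer; write $y_j=y(jh)$. Define $\bar\sigma_0^{(\alpha)}=1/\Gamma(2-\alpha)$, $$\bar\sigma_k^{(\alpha)}=\begin{cases}\dfrac{(k-1)^{1-\alpha}-2k^{1-\alpha}+(k+1)^{1-\alpha}}{\Gamma(2-\alpha)}, & 1\le k\le\lceil N/5\rceil,\\[6pt] \dfrac{1}{\Gamma(-\alpha)k^{1+\alpha}}+\dfrac{\alpha}{12\,\Gamma(-2-\alpha)k^{3+\alpha}}, & \lceil N/5\rceil<k\le n-1,\end{cases}$$ $$\bar\sigma_n^{(\alpha)}=\begin{cases}\dfrac{(n-1)^{1-\alpha}-n^{1-\alpha}}{\Gamma(2-\alpha)}, & n\le\lceil N/5\rceil,\\[6pt] -\dfrac{n^{-\alpha}}{\Gamma(1-\alpha)}+\dfrac{n^{-\alpha-1}}{2\Gamma(-\alpha)}-\dfrac{n^{-\alpha-2}}{6\Gamma(-1-\alpha)}, & n>\lceil N/5\rceil.\end{cases}$$ Then, as $h\to0$ (over those $N$ for which $x/h$ is an integer), $$\frac{1}{h^\alpha}\sum_{k=0}^n\bar\sigma_k^{(\alpha)}y_{n-k}=y^{(\alpha)}(x)+O(h^{2-\alpha}).$$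
   Context: For $0<\alpha<1$ the Caputo derivative is $y^{(\alpha)}(x)=\frac{1}{\Gamma(1-\alpha)}\int_0^x \frac{y'(t)}{(x-t)^\alpha}\,dt$. $\Gamma$ is the Euler gamma function (analytically continued to negative non-integers); $\lceil\cdot\rceil$ is the ceiling function. *)

theory Defs
  imports "HOL-Analysis.Analysis"
begin

definition caputo :: "real \<Rightarrow> (real \<Rightarrow> real) \<Rightarrow> real \<Rightarrow> real" where
  "caputo \<alpha> y1 x = (1 / Gamma (1 - \<alpha>)) * integral {0..x} (\<lambda>t. y1 t / (x - t) powr \<alpha>)"

definition sigma_bar :: "real \<Rightarrow> nat \<Rightarrow> nat \<Rightarrow> nat \<Rightarrow> real" where
  "sigma_bar \<alpha> N n k =
    (let m = \<lceil>real N / 5\<rceil>; r = real k in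
     if k = 0 then 1 / Gamma (2 - \<alpha>)
     else if k = n then
       (if int n \<le> m then ((real n - 1) powr (1 - \<alpha>) - real n powr (1 - \<alpha>)) / Gamma (2 - \<alpha>)
        else - (real n powr (- \<alpha>)) / Gamma (1 - \<alpha>)
             + real n powr (- \<alpha> - 1) / (2 * Gamma (- \<alpha>))
             - real n powr (- \<alpha> - 2) / (6 * Gamma (- 1 - \<alpha>)))
     else
       (if int k \<le> m then ((r - 1) powr (1 - \<alpha>) - 2 * r powr (1 - \<alpha>) + (r + 1) powr (1 - \<alpha>)) / Gamma (2 - \<alpha>)
        else 1 / (Gamma (- \<alpha>) * r powr (1 + \<alpha>)) + \<alpha> / (12 * Gamma (- 2 - \<alpha>) * r powr (3 + \<alpha>))))"

end

theory Submission
  imports Defs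
begin

text \<open>The weights \<open>sigma_bar\<close> are those of the classical L1 scheme, except that for
  \<open>k > \<lceil>N/5\<rceil>\<close> they are replaced by the first terms of the expansion of the L1 weights
  in powers of \<open>1/k\<close>. The L1 scheme is the Caputo integral with \<open>y'\<close> replaced on each cell by
  the difference quotient of \<open>y\<close>; since \<open>y'\<close> is Lipschitz, the error on the cell ending at \<open>x\<close>
  is controlled by the integral of the kernel \<open>(x - t) powr - \<alpha>\<close> over it and on every other cell
  by the oscillation of the kernel, which telescopes; in total it is \<open>O(h powr (2 - \<alpha>))\<close>.
  Replacing the weights changes each interior one by \<open>O(k^-3) = O(N^-3)\<close>, at most \<open>N\<close> times,
  and the last one by \<open>O(n^-2)\<close>; as \<open>N = T/h\<close> and \<open>n = x/h\<close>, after the factor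
  \<open>h powr - \<alpha>\<close> this is again \<open>O(h powr (2 - \<alpha>))\<close>.\<close>

definition powr_higher_deriv :: "real \<Rightarrow> nat \<Rightarrow> real \<Rightarrow> real" where
  "powr_higher_deriv b m t = (\<Prod>i<m. (b - real i)) * t powr (b - real m)"

lemma powr_higher_deriv_0: "powr_higher_deriv b 0 = (\<lambda>t. t powr b)"
  by (simp add: powr_higher_deriv_def fun_eq_iff)

lemma has_real_derivative_powr_higher_deriv:
  assumes "0 < t"
  shows "(powr_higher_deriv b m has_real_derivative powr_higher_deriv b (Suc m) t) (at t)"
proof -
  have "(powr_higher_deriv b m has_real_derivative
          (\<Prod>i<m. (b - real i)) * ((b - real m) * t powr (b - real m - 1))) (at t)"
    unfolding powr_higher_deriv_def
    by (intro DERIV_cmult has_real_derivative_powr[OF assms])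
  then show ?thesis
    by (simp add: powr_higher_deriv_def algebra_simps)
qed

lemma abs_powr_higher_deriv_le:
  assumes "0 \<le> b" "b \<le> real m" "0 < k" "k / 2 \<le> t"
  shows "\<bar>powr_higher_deriv b m t\<bar> \<le> \<bar>\<Prod>i<m. (b - real i)\<bar> * 2 ^ m * k powr (b - real m)"
proof -
  have "t powr (b - real m) \<le> (k / 2) powr (b - real m)"
    using assms by (intro powr_mono2') auto
  also have "\<dots> = 2 powr (real m - b) * k powr (b - real m)"
    using assms by (simp add: powr_divide powr_minus_divide divide_powr_uminus)
  also have "\<dots> \<le> 2 ^ m * k powr (b - real m)"
    using assms by (intro mult_right_mono) (auto simp: powr_realpow[symmetric])
  finally show ?thesis
    using assms by (simp add: powr_higher_deriv_def abs_mult mult.assoc mult_left_mono)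
qed

lemma powr_second_difference_remainder:
  assumes "0 \<le> b" "b \<le> 4" "2 \<le> k"
  shows "\<bar>(k - 1) powr b - 2 * k powr b + (k + 1) powr b - b * (b - 1) * k powr (b - 2)\<bar>
           \<le> 2 * \<bar>\<Prod>i<4. (b - real i)\<bar> * k powr (b - 4)"
proof -
  have D: "\<forall>m t. m < 4 \<and> k - 1 \<le> t \<and> t \<le> k + 1 \<longrightarrow>
             (powr_higher_deriv b m has_real_derivative powr_higher_deriv b (Suc m) t) (at t)"
    using assms by (auto intro!: has_real_derivative_powr_higher_deriv)
  obtain t1 where t1: "k < t1" "t1 < k + 1"
    "(k + 1) powr b = (\<Sum>m<4. powr_higher_deriv b m k / fact m * ((k + 1) - k) ^ m)
                       + powr_higher_deriv b 4 t1 / fact 4 * ((k + 1) - k) ^ 4"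
    using Taylor_up[of 4 "powr_higher_deriv b" "\<lambda>t. t powr b" "k - 1" "k + 1" k] D
    by (force simp: powr_higher_deriv_0)
  obtain t2 where t2: "k - 1 < t2" "t2 < k"
    "(k - 1) powr b = (\<Sum>m<4. powr_higher_deriv b m k / fact m * ((k - 1) - k) ^ m)
                       + powr_higher_deriv b 4 t2 / fact 4 * ((k - 1) - k) ^ 4"
    using Taylor_down[of 4 "powr_higher_deriv b" "\<lambda>t. t powr b" "k - 1" "k + 1" k] D
    by (force simp: powr_higher_deriv_0)
  \<comment> \<open>In the symmetric second difference the odd Taylor terms cancel.\<close>
  have rem: "(k - 1) powr b - 2 * k powr b + (k + 1) powr b - b * (b - 1) * k powr (b - 2)
               = powr_higher_deriv b 4 t1 / 24 + powr_higher_deriv b 4 t2 / 24"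
    using t1(3) t2(3)
    by (simp add: eval_nat_numeral powr_higher_deriv_def fact_numeral field_simps)
  have bound: "\<bar>powr_higher_deriv b 4 t\<bar> \<le> \<bar>\<Prod>i<4. (b - real i)\<bar> * 16 * k powr (b - 4)"
    if "k - 1 < t" for t
    using abs_powr_higher_deriv_le[of b 4 k t] assms that by simp
  show ?thesis
    using rem bound[of t1] bound[of t2] t1(1) t2(1) by linarith
qed

lemma powr_backward_difference_remainder:
  assumes "0 \<le> b" "b \<le> 3" "2 \<le> k"
  shows "\<bar>k powr b - (k - 1) powr b - (b * k powr (b - 1) - b * (b - 1) / 2 * k powr (b - 2))\<bar>
           \<le> 2 * \<bar>\<Prod>i<3. (b - real i)\<bar> * k powr (b - 3)"
proof -
  have D: "\<forall>m t. m < 3 \<and> k - 1 \<le> t \<and> t \<le> k \<longrightarrow>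
             (powr_higher_deriv b m has_real_derivative powr_higher_deriv b (Suc m) t) (at t)"
    using assms by (auto intro!: has_real_derivative_powr_higher_deriv)
  obtain t where t: "k - 1 < t" "t < k"
    "(k - 1) powr b = (\<Sum>m<3. powr_higher_deriv b m k / fact m * ((k - 1) - k) ^ m)
                       + powr_higher_deriv b 3 t / fact 3 * ((k - 1) - k) ^ 3"
    using Taylor_down[of 3 "powr_higher_deriv b" "\<lambda>t. t powr b" "k - 1" k k] D
    by (force simp: powr_higher_deriv_0)
  have "k powr b - (k - 1) powr b - (b * k powr (b - 1) - b * (b - 1) / 2 * k powr (b - 2))
          = powr_higher_deriv b 3 t / 6"
    using t(3) by (simp add: eval_nat_numeral powr_higher_deriv_def fact_numeral field_simps)
  moreover have "\<bar>powr_higher_deriv b 3 t\<bar> \<le> \<bar>\<Prod>i<3. (b - real i)\<bar> * 2 ^ 3 * k powr (b - 3)"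
    using abs_powr_higher_deriv_le[of b 3 k t] assms t by simp
  ultimately show ?thesis by simp
qed

lemma Gamma_shift_identities:
  fixes a :: real
  assumes "0 < a" "a < 1"
  shows "Gamma (2 - a) = (1 - a) * Gamma (1 - a)" "Gamma (1 - a) = - a * Gamma (- a)"
    and "0 < Gamma (1 - a)" "0 < Gamma (2 - a)" "Gamma (- a) \<noteq> 0"
proof -
  have "- a \<notin> \<int>"
  proof
    assume "- a \<in> \<int>"
    then obtain n where "- a = of_int n"
      by (blast elim: Ints_cases)
    with assms have "of_int n < (0::real)" "(-1::real) < of_int n"
      by linarith+
    then show False
      by simp
  qed
  then have "- a \<notin> \<int>\<^sub>\<le>\<^sub>0" "1 - a \<notin> \<int>\<^sub>\<le>\<^sub>0"
    using nonpos_Ints_subset_Ints Ints_diff[OF Ints_1, of "1 - a"] by auto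
  then show "Gamma (2 - a) = (1 - a) * Gamma (1 - a)" "Gamma (1 - a) = - a * Gamma (- a)"
      "Gamma (- a) \<noteq> 0"
    using Gamma_plus1[of "1 - a"] Gamma_plus1[of "- a"] Gamma_nonzero[of "- a"]
    by (simp_all add: algebra_simps)
  show "0 < Gamma (1 - a)" "0 < Gamma (2 - a)"
    using assms by simp_all
qed

lemma powr_neg_le_inverse_power:
  fixes k e :: real
  assumes "1 \<le> k" "real m \<le> e"
  shows "k powr (- e) \<le> 1 / k ^ m"
proof -
  have "k powr (- e) \<le> k powr (- real m)"
    using assms by (intro powr_mono) auto
  then show ?thesis
    using assms by (simp add: powr_minus powr_realpow divide_inverse)
qed

lemma abs_diff_le_inverse_power:
  fixes E G P c k e :: real
  assumes "1 \<le> k" "real m \<le> e" "0 < G" "0 \<le> P" "\<bar>E\<bar> \<le> P * k powr (- e)"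
  shows "\<bar>E / G - c * k powr (- e)\<bar> \<le> (P / G + \<bar>c\<bar>) / k ^ m"
proof -
  have K: "k powr (- e) \<le> 1 / k ^ m"
    using powr_neg_le_inverse_power assms(1,2) .
  have "\<bar>E / G - c * k powr (- e)\<bar> \<le> \<bar>E\<bar> / G + \<bar>c\<bar> * k powr (- e)"
    using abs_triangle_ineq4[of "E / G" "c * k powr (- e)"] assms(3) by (simp add: abs_mult)
  also have "\<dots> \<le> P * k powr (- e) / G + \<bar>c\<bar> * k powr (- e)"
    using assms(3,5) by (simp add: divide_right_mono)
  also have "\<dots> = (P / G + \<bar>c\<bar>) * k powr (- e)"
    by (simp add: algebra_simps)
  also have "\<dots> \<le> (P / G + \<bar>c\<bar>) * (1 / k ^ m)"
    using K assms(3,4) by (intro mult_left_mono) auto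
  finally show ?thesis
    by simp
qed

lemma l1_interior_weight_expansion:
  fixes a :: real
  assumes "0 < a" "a < 1"
  obtains C where "0 \<le> C"
    "\<And>k. 2 \<le> k \<Longrightarrow>
       \<bar>((k - 1) powr (1 - a) - 2 * k powr (1 - a) + (k + 1) powr (1 - a)) / Gamma (2 - a)
        - (1 / (Gamma (- a) * k powr (1 + a)) + a / (12 * Gamma (- 2 - a) * k powr (3 + a)))\<bar>
       \<le> C / k ^ 3"
proof
  note G = Gamma_shift_identities[OF assms]
  define P where "P = \<bar>\<Prod>i<4. (1 - a - real i)\<bar>"
  show "0 \<le> 2 * P / Gamma (2 - a) + \<bar>a / (12 * Gamma (- 2 - a))\<bar>"
    using G(4) by (simp add: P_def)
  fix k :: real
  assume k: "2 \<le> k"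
  define E where
    "E = (k - 1) powr (1 - a) - 2 * k powr (1 - a) + (k + 1) powr (1 - a)
         - (1 - a) * (1 - a - 1) * k powr (1 - a - 2)"
  have E: "\<bar>E\<bar> \<le> 2 * P * k powr (- (3 + a))"
    using powr_second_difference_remainder[of "1 - a" k] assms k by (simp add: E_def P_def)
  \<comment> \<open>The leading Taylor term of the L1 weight is exactly the first correction weight.\<close>
  have "((k - 1) powr (1 - a) - 2 * k powr (1 - a) + (k + 1) powr (1 - a)) / Gamma (2 - a)
        - (1 / (Gamma (- a) * k powr (1 + a)) + a / (12 * Gamma (- 2 - a) * k powr (3 + a)))
        = E / Gamma (2 - a) - a / (12 * Gamma (- 2 - a)) * k powr (- (3 + a))"
  proof -
    have "(1 - a) * (1 - a - 1) * k powr (1 - a - 2) / Gamma (2 - a) = 1 / (Gamma (- a) * k powr (1 + a))"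
    proof -
      have "k powr (1 - a - 2) = 1 / k powr (1 + a)"
        using powr_minus[of k "1 + a"] by (simp add: divide_inverse)
      then show ?thesis
        unfolding G(1) G(2) using G(5) assms k by simp
    qed
    moreover have "a / (12 * Gamma (- 2 - a) * k powr (3 + a)) = a / (12 * Gamma (- 2 - a)) * k powr (- (3 + a))"
      using powr_minus_divide[of k "3 + a"] by simp
    ultimately show ?thesis
      unfolding E_def by (simp add: diff_divide_distrib add_divide_distrib)
  qed
  also have "\<bar>E / Gamma (2 - a) - a / (12 * Gamma (- 2 - a)) * k powr (- (3 + a))\<bar>
               \<le> (2 * P / Gamma (2 - a) + \<bar>a / (12 * Gamma (- 2 - a))\<bar>) / k ^ 3"
    using E G(4) k assms by (intro abs_diff_le_inverse_power) (auto simp: P_def)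
  finally show "\<bar>((k - 1) powr (1 - a) - 2 * k powr (1 - a) + (k + 1) powr (1 - a)) / Gamma (2 - a)
        - (1 / (Gamma (- a) * k powr (1 + a)) + a / (12 * Gamma (- 2 - a) * k powr (3 + a)))\<bar>
       \<le> (2 * P / Gamma (2 - a) + \<bar>a / (12 * Gamma (- 2 - a))\<bar>) / k ^ 3" .
qed

lemma l1_last_weight_expansion:
  fixes a :: real
  assumes "0 < a" "a < 1"
  obtains C where "0 \<le> C"
    "\<And>k. 2 \<le> k \<Longrightarrow>
       \<bar>((k - 1) powr (1 - a) - k powr (1 - a)) / Gamma (2 - a)
        - (- (k powr (- a)) / Gamma (1 - a) + k powr (- a - 1) / (2 * Gamma (- a))
           - k powr (- a - 2) / (6 * Gamma (- 1 - a)))\<bar>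
       \<le> C / k ^ 2"
proof
  note G = Gamma_shift_identities[OF assms]
  define P where "P = \<bar>\<Prod>i<3. (1 - a - real i)\<bar>"
  show "0 \<le> 2 * P / Gamma (2 - a) + \<bar>1 / (6 * Gamma (- 1 - a))\<bar>"
    using G(4) by (simp add: P_def)
  fix k :: real
  assume k: "2 \<le> k"
  define E where
    "E = k powr (1 - a) - (k - 1) powr (1 - a)
         - ((1 - a) * k powr (1 - a - 1) - (1 - a) * (1 - a - 1) / 2 * k powr (1 - a - 2))"
  have E: "\<bar>E\<bar> \<le> 2 * P * k powr (- (2 + a))"
    using powr_backward_difference_remainder[of "1 - a" k] assms k by (simp add: E_def P_def)
  have "((k - 1) powr (1 - a) - k powr (1 - a)) / Gamma (2 - a)
        - (- (k powr (- a)) / Gamma (1 - a) + k powr (- a - 1) / (2 * Gamma (- a))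
           - k powr (- a - 2) / (6 * Gamma (- 1 - a)))
        = - (E / Gamma (2 - a) - 1 / (6 * Gamma (- 1 - a)) * k powr (- (2 + a)))"
  proof -
    have "(1 - a) * k powr (1 - a - 1) / Gamma (2 - a) = k powr (- a) / Gamma (1 - a)"
      unfolding G(1) using G(3) assms by simp
    moreover have "(1 - a) * (1 - a - 1) / 2 * k powr (- a - 1) / Gamma (2 - a)
                     = k powr (- a - 1) / (2 * Gamma (- a))"
      unfolding G(1) G(2) using G(5) assms by (simp add: diff_diff_eq add.commute)
    moreover have "1 - a - 2 = - a - 1"
      by simp
    moreover have "k powr (- (2 + a)) = k powr (- a - 2)"
      by (rule arg_cong[where f = "\<lambda>e. k powr e"]) simp
    ultimately show ?thesis
      unfolding E_def by (simp only:) (simp add: diff_divide_distrib add_divide_distrib)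
  qed
  also have "\<bar>- (E / Gamma (2 - a) - 1 / (6 * Gamma (- 1 - a)) * k powr (- (2 + a)))\<bar>
               \<le> (2 * P / Gamma (2 - a) + \<bar>1 / (6 * Gamma (- 1 - a))\<bar>) / k ^ 2"
    unfolding abs_minus_cancel
    using E G(4) k assms by (intro abs_diff_le_inverse_power) (auto simp: P_def)
  finally show "\<bar>((k - 1) powr (1 - a) - k powr (1 - a)) / Gamma (2 - a)
        - (- (k powr (- a)) / Gamma (1 - a) + k powr (- a - 1) / (2 * Gamma (- a))
           - k powr (- a - 2) / (6 * Gamma (- 1 - a)))\<bar>
       \<le> (2 * P / Gamma (2 - a) + \<bar>1 / (6 * Gamma (- 1 - a))\<bar>) / k ^ 2" .
qed

lemma sum_mult_diff_Suc_by_parts: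
  fixes b z :: "nat \<Rightarrow> real"
  assumes "1 \<le> n"
  shows "(\<Sum>i<n. b i * (z i - z (Suc i)))
           = b 0 * z 0 + (\<Sum>k=1..<n. (b k - b (k - 1)) * z k) - b (n - 1) * z n"
  using assms
proof (induction n rule: dec_induct)
  case base
  then show ?case by (simp add: algebra_simps)
next
  case (step m)
  then show ?case by (simp add: algebra_simps)
qed

text \<open>The weights of the L1 scheme, which integrates the kernel of the Caputo derivative against the
  piecewise linear interpolant of \<open>y\<close> on the grid.\<close>
definition l1_weight :: "real \<Rightarrow> nat \<Rightarrow> nat \<Rightarrow> real" where
  "l1_weight a n k =
    (if k = 0 then 1 / Gamma (2 - a)
     else if k = n then ((real n - 1) powr (1 - a) - real n powr (1 - a)) / Gamma (2 - a)
     else ((real k - 1) powr (1 - a) - 2 * real k powr (1 - a) + (real k + 1) powr (1 - a))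
          / Gamma (2 - a))"

lemma sum_l1_weight:
  fixes z :: "nat \<Rightarrow> real"
  assumes "1 \<le> n"
  shows "(\<Sum>k=0..n. l1_weight a n k * z k)
           = (\<Sum>i<n. (real (Suc i) powr (1 - a) - real i powr (1 - a)) * (z i - z (Suc i)))
             / Gamma (2 - a)"
proof -
  define b where "b i = real (Suc i) powr (1 - a) - real i powr (1 - a)" for i
  have "{0..n} = insert 0 (insert n {1..<n})"
    using assms by auto
  then have "(\<Sum>k=0..n. l1_weight a n k * z k)
               = l1_weight a n 0 * z 0 + (\<Sum>k=1..<n. l1_weight a n k * z k) + l1_weight a n n * z n"
    using assms by (simp add: algebra_simps)
  also have "\<dots> = (b 0 * z 0 + (\<Sum>k=1..<n. (b k - b (k - 1)) * z k) - b (n - 1) * z n) / Gamma (2 - a)"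
  proof -
    have "(\<Sum>k=1..<n. l1_weight a n k * z k) = (\<Sum>k=1..<n. (b k - b (k - 1)) * z k) / Gamma (2 - a)"
      unfolding sum_divide_distrib
      by (rule sum.cong) (auto simp: l1_weight_def b_def of_nat_diff add.commute)
    moreover have "l1_weight a n 0 = b 0 / Gamma (2 - a)" "l1_weight a n n = - b (n - 1) / Gamma (2 - a)"
      using assms by (simp_all add: l1_weight_def b_def of_nat_diff diff_divide_distrib)
    ultimately show ?thesis
      by (simp add: diff_divide_distrib add_divide_distrib)
  qed
  also have "\<dots> = (\<Sum>i<n. b i * (z i - z (Suc i))) / Gamma (2 - a)"
    using sum_mult_diff_Suc_by_parts[OF assms, of b z] by simp
  finally show ?thesis
    unfolding b_def .
qed

lemma ceiling_fifth_less_imp: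
  fixes N k :: nat
  assumes "2 \<le> N" "\<lceil>real N / 5\<rceil> < int k"
  shows "2 \<le> k" "1 / real k ^ 3 \<le> 125 / real N ^ 3"
proof -
  have "1 \<le> \<lceil>real N / 5\<rceil>"
    using assms by simp
  then show "2 \<le> k"
    using assms by linarith
  have "real N / 5 \<le> real k"
    using le_of_int_ceiling[of "real N / 5"] assms(2) by linarith
  then have "real N ^ 3 \<le> 125 * real k ^ 3"
    using power_mono[of "real N / 5" "real k" 3] by (simp add: power_divide)
  then show "1 / real k ^ 3 \<le> 125 / real N ^ 3"
    using assms \<open>2 \<le> k\<close> by (simp add: field_simps)
qed

lemma sigma_bar_eq_l1_weight:
  assumes "int k \<le> \<lceil>real N / 5\<rceil>"
  shows "sigma_bar a N n k = l1_weight a n k"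
  using assms by (simp add: sigma_bar_def l1_weight_def Let_def)

lemma abs_sigma_bar_minus_l1_weight_interior_le:
  fixes a :: real
  assumes "0 < a" "a < 1"
  obtains C where "0 \<le> C"
    "\<And>N n k. 2 \<le> N \<Longrightarrow> \<lceil>real N / 5\<rceil> < int k \<Longrightarrow> k \<noteq> n \<Longrightarrow>
       \<bar>sigma_bar a N n k - l1_weight a n k\<bar> \<le> C / real N ^ 3"
proof -
  obtain C where C: "0 \<le> C"
    "\<And>k. 2 \<le> k \<Longrightarrow>
       \<bar>((k - 1) powr (1 - a) - 2 * k powr (1 - a) + (k + 1) powr (1 - a)) / Gamma (2 - a)
        - (1 / (Gamma (- a) * k powr (1 + a)) + a / (12 * Gamma (- 2 - a) * k powr (3 + a)))\<bar>
       \<le> C / k ^ 3"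
    using l1_interior_weight_expansion[OF assms] by blast
  show ?thesis
  proof (rule that[of "125 * C"])
    fix N n k :: nat
    assume N: "2 \<le> N" and k: "\<lceil>real N / 5\<rceil> < int k" "k \<noteq> n"
    note kN = ceiling_fifth_less_imp[OF N k(1)]
    have "\<bar>sigma_bar a N n k - l1_weight a n k\<bar> \<le> C / real k ^ 3"
      using C(2)[of "real k"] kN(1) k by (simp add: sigma_bar_def l1_weight_def Let_def abs_minus_commute)
    also have "\<dots> \<le> C * (125 / real N ^ 3)"
      using mult_left_mono[OF kN(2) C(1)] by simp
    finally show "\<bar>sigma_bar a N n k - l1_weight a n k\<bar> \<le> 125 * C / real N ^ 3"
      by (simp add: mult.commute)
  qed (use C in simp)
qed

lemma abs_sigma_bar_minus_l1_weight_last_le: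
  fixes a :: real
  assumes "0 < a" "a < 1"
  obtains C where "0 \<le> C"
    "\<And>N n. 2 \<le> N \<Longrightarrow> \<lceil>real N / 5\<rceil> < int n \<Longrightarrow>
       \<bar>sigma_bar a N n n - l1_weight a n n\<bar> \<le> C / real n ^ 2"
proof -
  obtain C where C: "0 \<le> C"
    "\<And>k. 2 \<le> k \<Longrightarrow>
       \<bar>((k - 1) powr (1 - a) - k powr (1 - a)) / Gamma (2 - a)
        - (- (k powr (- a)) / Gamma (1 - a) + k powr (- a - 1) / (2 * Gamma (- a))
           - k powr (- a - 2) / (6 * Gamma (- 1 - a)))\<bar>
       \<le> C / k ^ 2"
    using l1_last_weight_expansion[OF assms] by blast
  show ?thesis
  proof (rule that[of C])
    fix N n :: nat
    assume "2 \<le> N" "\<lceil>real N / 5\<rceil> < int n"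
    then show "\<bar>sigma_bar a N n n - l1_weight a n n\<bar> \<le> C / real n ^ 2"
      using C(2)[of "real n"] ceiling_fifth_less_imp[of N n]
      by (simp add: sigma_bar_def l1_weight_def Let_def abs_minus_commute)
  qed (use C in simp)
qed

lemma abs_sigma_bar_minus_l1_weight_le:
  fixes a :: real
  assumes "0 < a" "a < 1"
  obtains C where "0 \<le> C"
    "\<And>N n k. 2 \<le> N \<Longrightarrow>
       \<bar>sigma_bar a N n k - l1_weight a n k\<bar> \<le> C / real N ^ 3 + (if k = n then C / real n ^ 2 else 0)"
proof -
  obtain C1 where C1: "0 \<le> C1" "\<And>N n k. 2 \<le> N \<Longrightarrow> \<lceil>real N / 5\<rceil> < int k \<Longrightarrow> k \<noteq> n \<Longrightarrow>
       \<bar>sigma_bar a N n k - l1_weight a n k\<bar> \<le> C1 / real N ^ 3"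
    using abs_sigma_bar_minus_l1_weight_interior_le[OF assms] by blast
  obtain C2 where C2: "0 \<le> C2" "\<And>N n. 2 \<le> N \<Longrightarrow> \<lceil>real N / 5\<rceil> < int n \<Longrightarrow>
       \<bar>sigma_bar a N n n - l1_weight a n n\<bar> \<le> C2 / real n ^ 2"
    using abs_sigma_bar_minus_l1_weight_last_le[OF assms] by blast
  show ?thesis
  proof (rule that[of "C1 + C2"])
    fix N n k :: nat
    assume N: "2 \<le> N"
    have bounds: "C1 / real N ^ 3 \<le> (C1 + C2) / real N ^ 3" "C2 / real n ^ 2 \<le> (C1 + C2) / real n ^ 2"
      "0 \<le> (C1 + C2) / real N ^ 3" "0 \<le> (C1 + C2) / real n ^ 2"
      using C1(1) C2(1) by (simp_all add: divide_right_mono)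
    show "\<bar>sigma_bar a N n k - l1_weight a n k\<bar>
            \<le> (C1 + C2) / real N ^ 3 + (if k = n then (C1 + C2) / real n ^ 2 else 0)"
    proof (cases "int k \<le> \<lceil>real N / 5\<rceil>")
      case True
      then show ?thesis
        using sigma_bar_eq_l1_weight bounds(3,4) by simp
    next
      case big: False
      show ?thesis
      proof (cases "k = n")
        case True
        then show ?thesis
          using order_trans[OF C2(2)[OF N] bounds(2)] big bounds(3) by (simp add: add_increasing)
      next
        case False
        then show ?thesis
          using order_trans[OF C1(2)[OF N _ False] bounds(1)] big by simp
      qed
    qed
  qed (use C1 C2 in simp)
qed

lemma sum_sigma_bar_minus_l1_weight_le:
  fixes a :: real
  assumes "0 < a" "a < 1"
  obtains C where "0 \<le> C"
    "\<And>N n z M. 2 \<le> N \<Longrightarrow> 1 \<le> n \<Longrightarrow> n \<le> N \<Longrightarrow> (\<And>k. k \<le> n \<Longrightarrow> \<bar>z k\<bar> \<le> M) \<Longrightarrow>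
       \<bar>\<Sum>k=0..n. (sigma_bar a N n k - l1_weight a n k) * z k\<bar>
         \<le> C * M * (1 / real N ^ 2 + 1 / real n ^ 2)"
proof -
  obtain C where C: "0 \<le> C"
    "\<And>N n k. 2 \<le> N \<Longrightarrow>
       \<bar>sigma_bar a N n k - l1_weight a n k\<bar> \<le> C / real N ^ 3 + (if k = n then C / real n ^ 2 else 0)"
    using abs_sigma_bar_minus_l1_weight_le[OF assms] by blast
  show ?thesis
  proof (rule that[of "2 * C"])
    fix N n :: nat and z :: "nat \<Rightarrow> real" and M :: real
    assume N: "2 \<le> N" and n: "1 \<le> n" "n \<le> N" and z: "\<And>k. k \<le> n \<Longrightarrow> \<bar>z k\<bar> \<le> M"
    have M: "0 \<le> M"
      using z[of 0] by simp
    have "\<bar>\<Sum>k=0..n. (sigma_bar a N n k - l1_weight a n k) * z k\<bar>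
            \<le> (\<Sum>k=0..n. \<bar>sigma_bar a N n k - l1_weight a n k\<bar> * \<bar>z k\<bar>)"
      by (rule order_trans[OF sum_abs]) (simp add: abs_mult)
    also have "\<dots> \<le> (\<Sum>k=0..n. (C / real N ^ 3 + (if k = n then C / real n ^ 2 else 0)) * M)"
      by (intro sum_mono mult_mono) (use C(1) C(2)[OF N] z in auto)
    also have "\<dots> = real (Suc n) * C * M / real N ^ 3 + C * M / real n ^ 2"
      by (simp add: sum.distrib algebra_simps flip: sum_distrib_left)
    also have "\<dots> \<le> 2 * real N * C * M / real N ^ 3 + C * M / real n ^ 2"
      using n C(1) M by (intro add_mono divide_right_mono mult_right_mono) auto
    also have "\<dots> = 2 * C * M * (1 / real N ^ 2) + C * M * (1 / real n ^ 2)"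
      using N by (simp add: power2_eq_square power3_eq_cube)
    also have "\<dots> \<le> 2 * C * M * (1 / real N ^ 2 + 1 / real n ^ 2)"
      using C(1) M by (simp add: distrib_left divide_right_mono)
    finally show "\<bar>\<Sum>k=0..n. (sigma_bar a N n k - l1_weight a n k) * z k\<bar>
                    \<le> 2 * C * M * (1 / real N ^ 2 + 1 / real n ^ 2)" .
  qed (use C in simp)
qed

lemma has_integral_inverse_powr_kernel:
  fixes a u v x :: real
  assumes "a < 1" "u \<le> v" "v \<le> x"
  shows "((\<lambda>t. 1 / (x - t) powr a) has_integral ((x - u) powr (1 - a) - (x - v) powr (1 - a)) / (1 - a))
           {u..v}"
proof -
  define F where "F t = - ((x - t) powr (1 - a)) / (1 - a)" for t
  have "((\<lambda>t. 1 / (x - t) powr a) has_integral (F v - F u)) {u..v}"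
  proof (rule fundamental_theorem_of_calculus_interior[OF assms(2)])
    show "continuous_on {u..v} F"
      unfolding F_def using assms by (intro continuous_intros continuous_on_powr') auto
    fix t
    assume "t \<in> {u<..<v}"
    then have xt: "0 < x - t"
      using assms by auto
    have "(F has_real_derivative (1 - a) * (x - t) powr (1 - a - 1) / (1 - a)) (at t)"
      unfolding F_def using xt by (auto intro!: derivative_eq_intros)
    moreover have "(1 - a) * (x - t) powr (1 - a - 1) / (1 - a) = 1 / (x - t) powr a"
      using assms xt by (simp add: powr_minus divide_inverse)
    ultimately show "(F has_vector_derivative 1 / (x - t) powr a) (at t)"
      by (simp add: has_real_derivative_iff_has_vector_derivative)
  qed
  then show ?thesis
    by (simp add: F_def diff_divide_distrib)
qed

lemma integrable_on_div_powr_kernel: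
  fixes a x :: real and f :: "real \<Rightarrow> real"
  assumes "0 \<le> a" "a < 1" "0 \<le> x" "continuous_on {0..x} f"
  shows "(\<lambda>t. f t / (x - t) powr a) integrable_on {0..x}"
proof -
  have "(\<lambda>t. 1 / (x - t) powr a) integrable_on {0..x}"
    using has_integral_inverse_powr_kernel[of a 0 x x] assms by blast
  then have "(\<lambda>t. 1 / (x - t) powr a) absolutely_integrable_on {0..x}"
    by (rule nonnegative_absolutely_integrable_1) simp
  then have "(\<lambda>t. f t * (1 / (x - t) powr a)) absolutely_integrable_on {0..x}"
    using assms
    by (intro absolutely_integrable_bounded_measurable_product_real continuous_imp_measurable_on_sets_lebesgue
          compact_imp_bounded compact_continuous_image) auto
  then show ?thesis
    by (simp add: absolutely_integrable_on_def)
qed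

lemma integral_uniform_cells:
  fixes f :: "real \<Rightarrow> real"
  assumes "f integrable_on {x - real n * h..x}" "0 \<le> h"
  shows "integral {x - real n * h..x} f = (\<Sum>i<n. integral {x - real (Suc i) * h..x - real i * h} f)"
  using assms(1)
proof (induction n)
  case 0
  then show ?case by simp
next
  case (Suc n)
  have "f integrable_on {x - real n * h..x}"
    by (rule integrable_on_subinterval[OF Suc.prems]) (use assms(2) in \<open>auto simp: algebra_simps\<close>)
  then have "integral {x - real n * h..x} f = (\<Sum>i<n. integral {x - real (Suc i) * h..x - real i * h} f)"
    by (rule Suc.IH)
  moreover have "integral {x - real (Suc n) * h..x} f
                   = integral {x - real (Suc n) * h..x - real n * h} f + integral {x - real n * h..x} f"
    using Suc.prems assms(2)
    by (intro Henstock_Kurzweil_Integration.integral_combine[symmetric]) (auto simp: algebra_simps)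
  ultimately show ?case
    by simp
qed

lemma abs_difference_quotient_minus_deriv_le:
  fixes y y1 :: "real \<Rightarrow> real"
  assumes "u < v"
    and deriv: "\<And>t. t \<in> {u..v} \<Longrightarrow> (y has_real_derivative y1 t) (at t within {u..v})"
    and lip: "\<And>s t. s \<in> {u..v} \<Longrightarrow> t \<in> {u..v} \<Longrightarrow> \<bar>y1 s - y1 t\<bar> \<le> L * \<bar>s - t\<bar>"
    and "t \<in> {u..v}"
  shows "\<bar>(y v - y u) / (v - u) - y1 t\<bar> \<le> L * (v - u)"
proof -
  have "\<exists>\<xi>\<in>{u<..<v}. y v - y u = y1 \<xi> * (v - u)"
  proof (rule mvt_simple[OF assms(1)])
    fix s
    assume "u \<le> s" "s \<le> v"
    then show "(y has_derivative (*) (y1 s)) (at s within {u..v})"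
      using deriv[of s] by (simp add: has_field_derivative_def)
  qed
  then obtain \<xi> where \<xi>: "\<xi> \<in> {u<..<v}" "y v - y u = y1 \<xi> * (v - u)"
    by blast
  have "0 \<le> L * \<bar>u - v\<bar>"
    by (rule order_trans[OF abs_ge_zero lip]) (use assms(1) in auto)
  then have "0 \<le> L"
    using assms(1) by (simp add: zero_le_mult_iff)
  have "\<bar>y1 \<xi> - y1 t\<bar> \<le> L * \<bar>\<xi> - t\<bar>"
    using \<xi>(1) assms(4) by (intro lip) auto
  also have "\<dots> \<le> L * (v - u)"
    using \<xi>(1) assms(4) \<open>0 \<le> L\<close> by (intro mult_left_mono) auto
  finally show ?thesis
    using \<xi>(2) assms(1) by simp
qed

lemma difference_quotient_weighted_error:
  fixes y y1 w :: "real \<Rightarrow> real"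
  assumes "u < v"
    and deriv: "\<And>t. t \<in> {u..v} \<Longrightarrow> (y has_real_derivative y1 t) (at t within {u..v})"
    and lip: "\<And>s t. s \<in> {u..v} \<Longrightarrow> t \<in> {u..v} \<Longrightarrow> \<bar>y1 s - y1 t\<bar> \<le> L * \<bar>s - t\<bar>"
    and W: "(w has_integral W) {u..v}" and w: "\<And>t. t \<in> {u..v} \<Longrightarrow> 0 \<le> w t"
    and "(\<lambda>t. y1 t * w t) integrable_on {u..v}"
  shows "\<bar>(y v - y u) / (v - u) * W - integral {u..v} (\<lambda>t. y1 t * w t)\<bar> \<le> L * (v - u) * W"
proof -
  define \<delta> where "\<delta> = (y v - y u) / (v - u)"
  have err: "((\<lambda>t. (\<delta> - y1 t) * w t) has_integral \<delta> * W - integral {u..v} (\<lambda>t. y1 t * w t)) {u..v}"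
    using has_integral_diff[OF has_integral_mult_right[OF W, of \<delta>] integrable_integral[OF assms(6)]]
    by (simp add: algebra_simps)
  have "\<bar>\<delta> * W - integral {u..v} (\<lambda>t. y1 t * w t)\<bar> \<le> integral {u..v} (\<lambda>t. L * (v - u) * w t)"
    unfolding integral_unique[OF err, symmetric] real_norm_def[symmetric]
  proof (rule integral_norm_bound_integral)
    show "(\<lambda>t. L * (v - u) * w t) integrable_on {u..v}"
      by (rule has_integral_integrable[OF has_integral_mult_right[OF W]])
    fix t
    assume "t \<in> {u..v}"
    then show "norm ((\<delta> - y1 t) * w t) \<le> L * (v - u) * w t"
      using abs_difference_quotient_minus_deriv_le[OF assms(1) deriv lip] w
      by (simp add: \<delta>_def abs_mult mult_right_mono)
  qed (use err in blast)
  also have "\<dots> = L * (v - u) * W"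
    using W by (simp add: integral_unique)
  finally show ?thesis
    unfolding \<delta>_def .
qed

text \<open>Since the difference quotient is the mean of \<open>y1\<close> over the cell, the weight may be shifted
  by the constant \<open>w u\<close>; for a monotone weight this leaves only its oscillation over the cell.\<close>
lemma difference_quotient_monotone_weight_error:
  fixes y y1 w :: "real \<Rightarrow> real"
  assumes "u < v"
    and deriv: "\<And>t. t \<in> {u..v} \<Longrightarrow> (y has_real_derivative y1 t) (at t within {u..v})"
    and lip: "\<And>s t. s \<in> {u..v} \<Longrightarrow> t \<in> {u..v} \<Longrightarrow> \<bar>y1 s - y1 t\<bar> \<le> L * \<bar>s - t\<bar>"
    and W: "(w has_integral W) {u..v}" and w: "mono_on {u..v} w"
    and "(\<lambda>t. y1 t * w t) integrable_on {u..v}"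
  shows "\<bar>(y v - y u) / (v - u) * W - integral {u..v} (\<lambda>t. y1 t * w t)\<bar> \<le> L * (v - u) ^ 2 * (w v - w u)"
proof -
  define \<delta> where "\<delta> = (y v - y u) / (v - u)"
  have "(y1 has_integral y v - y u) {u..v}"
  proof (rule fundamental_theorem_of_calculus)
    fix t
    assume "t \<in> {u..v}"
    then show "(y has_vector_derivative y1 t) (at t within {u..v})"
      using deriv by (simp add: has_real_derivative_iff_has_vector_derivative)
  qed (use assms(1) in simp)
  then have "((\<lambda>t. \<delta> - y1 t) has_integral \<delta> * (v - u) - (y v - y u)) {u..v}"
    using has_integral_diff[OF has_integral_const_real[of \<delta> u v]] assms(1) by (simp add: mult.commute)
  moreover have "\<delta> * (v - u) - (y v - y u) = 0"
    using assms(1) by (simp add: \<delta>_def)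
  ultimately have shift: "((\<lambda>t. (\<delta> - y1 t) * w u) has_integral 0) {u..v}"
    using has_integral_mult_left[of _ 0 _ "w u"] by simp
  have "((\<lambda>t. (\<delta> - y1 t) * w t) has_integral \<delta> * W - integral {u..v} (\<lambda>t. y1 t * w t)) {u..v}"
    using has_integral_diff[OF has_integral_mult_right[OF W, of \<delta>] integrable_integral[OF assms(6)]]
    by (simp add: algebra_simps)
  from has_integral_diff[OF this shift]
  have err: "((\<lambda>t. (\<delta> - y1 t) * (w t - w u)) has_integral \<delta> * W - integral {u..v} (\<lambda>t. y1 t * w t))
      {u..v}"
    by (simp add: right_diff_distrib)
  have "\<bar>\<delta> * W - integral {u..v} (\<lambda>t. y1 t * w t)\<bar> \<le> integral {u..v} (\<lambda>t. L * (v - u) * (w v - w u))"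
    unfolding integral_unique[OF err, symmetric] real_norm_def[symmetric]
  proof (rule integral_norm_bound_integral)
    fix t
    assume t: "t \<in> {u..v}"
    then have "w u \<le> w t" "w t \<le> w v"
      using mono_onD[OF w] assms(1) by auto
    then have "\<bar>w t - w u\<bar> \<le> w v - w u"
      by simp
    then show "norm ((\<delta> - y1 t) * (w t - w u)) \<le> L * (v - u) * (w v - w u)"
      using abs_difference_quotient_minus_deriv_le[OF assms(1) deriv lip t]
      by (simp add: \<delta>_def abs_mult mult_mono)
  qed (use err in auto)
  also have "\<dots> = L * (v - u) ^ 2 * (w v - w u)"
    using assms(1) by (simp add: power2_eq_square)
  finally show ?thesis
    unfolding \<delta>_def .
qed

lemma caputo_kernel_cell_error:
  fixes a u v x L :: real and y y1 :: "real \<Rightarrow> real"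
  assumes "0 \<le> a" "a < 1" "u < v" "v \<le> x"
    and deriv: "\<And>t. t \<in> {u..v} \<Longrightarrow> (y has_real_derivative y1 t) (at t within {u..v})"
    and lip: "\<And>s t. s \<in> {u..v} \<Longrightarrow> t \<in> {u..v} \<Longrightarrow> \<bar>y1 s - y1 t\<bar> \<le> L * \<bar>s - t\<bar>"
    and "(\<lambda>t. y1 t / (x - t) powr a) integrable_on {u..v}"
  shows "\<bar>(y v - y u) / (v - u) * (((x - u) powr (1 - a) - (x - v) powr (1 - a)) / (1 - a))
            - integral {u..v} (\<lambda>t. y1 t / (x - t) powr a)\<bar>
           \<le> L * (v - u) * (((x - u) powr (1 - a) - (x - v) powr (1 - a)) / (1 - a))"
  using difference_quotient_weighted_error[OF assms(3) deriv lip
      has_integral_inverse_powr_kernel[OF assms(2) less_imp_le[OF assms(3)] assms(4)]] assms(7)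
  by simp

lemma caputo_kernel_cell_error_off_diagonal:
  fixes a u v x L :: real and y y1 :: "real \<Rightarrow> real"
  assumes "0 \<le> a" "a < 1" "u < v" "v < x"
    and deriv: "\<And>t. t \<in> {u..v} \<Longrightarrow> (y has_real_derivative y1 t) (at t within {u..v})"
    and lip: "\<And>s t. s \<in> {u..v} \<Longrightarrow> t \<in> {u..v} \<Longrightarrow> \<bar>y1 s - y1 t\<bar> \<le> L * \<bar>s - t\<bar>"
    and "(\<lambda>t. y1 t / (x - t) powr a) integrable_on {u..v}"
  shows "\<bar>(y v - y u) / (v - u) * (((x - u) powr (1 - a) - (x - v) powr (1 - a)) / (1 - a))
            - integral {u..v} (\<lambda>t. y1 t / (x - t) powr a)\<bar>
           \<le> L * (v - u) ^ 2 * (1 / (x - v) powr a - 1 / (x - u) powr a)"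
proof -
  have "mono_on {u..v} (\<lambda>t. 1 / (x - t) powr a)"
    using assms(1,4) by (intro mono_onI divide_left_mono powr_mono2) auto
  then show ?thesis
    using difference_quotient_monotone_weight_error[OF assms(3) deriv lip
        has_integral_inverse_powr_kernel[OF assms(2) less_imp_le[OF assms(3)] less_imp_le[OF assms(4)]]]
      assms(7)
    by simp
qed

lemma l1_cell_error:
  fixes a h x L :: real and y y1 :: "real \<Rightarrow> real" and i :: nat
  assumes a: "0 < a" "a < 1" and h: "0 < h" and i: "real (Suc i) * h \<le> x"
    and deriv: "\<And>t. t \<in> {0..x} \<Longrightarrow> (y has_real_derivative y1 t) (at t within {0..x})"
    and lip: "\<And>s t. s \<in> {0..x} \<Longrightarrow> t \<in> {0..x} \<Longrightarrow> \<bar>y1 s - y1 t\<bar> \<le> L * \<bar>s - t\<bar>"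
    and int: "(\<lambda>t. y1 t / (x - t) powr a) integrable_on {0..x}"
  shows "\<bar>(y (x - real i * h) - y (x - real (Suc i) * h)) / h
            * (h powr (1 - a) * (real (Suc i) powr (1 - a) - real i powr (1 - a)) / (1 - a))
          - integral {x - real (Suc i) * h..x - real i * h} (\<lambda>t. y1 t / (x - t) powr a)\<bar>
         \<le> (if i = 0 then L * h powr (2 - a) / (1 - a)
             else L * h ^ 2 * (1 / (real i * h) powr a - 1 / (real (Suc i) * h) powr a))"
    (is "\<bar>?E\<bar> \<le> _")
proof -
  define u where "u = x - real (Suc i) * h"
  define v where "v = x - real i * h"
  have cell: "0 \<le> u" "u < v" "v \<le> x" "v - u = h" "x - u = real (Suc i) * h" "x - v = real i * h"
    using i h by (auto simp: u_def v_def algebra_simps)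
  then have sub: "{u..v} \<subseteq> {0..x}"
    by auto
  have deriv_uv: "(y has_real_derivative y1 t) (at t within {u..v})" if "t \<in> {u..v}" for t
    using has_field_derivative_subset[OF deriv] sub that by blast
  have lip_uv: "\<bar>y1 s - y1 t\<bar> \<le> L * \<bar>s - t\<bar>" if "s \<in> {u..v}" "t \<in> {u..v}" for s t
    using lip sub that by blast
  note int_uv = integrable_on_subinterval[OF int sub]
  have W: "((x - u) powr (1 - a) - (x - v) powr (1 - a)) / (1 - a)
             = h powr (1 - a) * (real (Suc i) powr (1 - a) - real i powr (1 - a)) / (1 - a)"
    unfolding cell(5,6) powr_mult by (simp add: algebra_simps)
  show ?thesis
  proof (cases "i = 0")
    case True
    have "\<bar>(y v - y u) / h * (h powr (1 - a) * (real (Suc i) powr (1 - a) - real i powr (1 - a)) / (1 - a))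
            - integral {u..v} (\<lambda>t. y1 t / (x - t) powr a)\<bar>
          \<le> L * h * (h powr (1 - a) * (real (Suc i) powr (1 - a) - real i powr (1 - a)) / (1 - a))"
      using caputo_kernel_cell_error[OF _ a(2) cell(2,3) deriv_uv lip_uv int_uv] a
      unfolding cell(4) W by simp
    then have "\<bar>?E\<bar> \<le> L * h * (h powr (1 - a) * (real (Suc i) powr (1 - a) - real i powr (1 - a)) / (1 - a))"
      unfolding u_def v_def .
    moreover have "h * h powr (1 - a) = h powr (2 - a)"
      using powr_mult_base[of h "1 - a"] h by simp
    ultimately show ?thesis
      using True by (simp add: mult.assoc)
  next
    case False
    then have "v < x"
      using h by (simp add: v_def)
    then have "\<bar>(y v - y u) / h * (h powr (1 - a) * (real (Suc i) powr (1 - a) - real i powr (1 - a)) / (1 - a))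
                 - integral {u..v} (\<lambda>t. y1 t / (x - t) powr a)\<bar>
               \<le> L * h ^ 2 * (1 / (x - v) powr a - 1 / (x - u) powr a)"
      using caputo_kernel_cell_error_off_diagonal[OF _ a(2) cell(2) _ deriv_uv lip_uv int_uv] a
      unfolding cell(4) W by simp
    then have "\<bar>?E\<bar> \<le> L * h ^ 2 * (1 / (x - v) powr a - 1 / (x - u) powr a)"
      unfolding u_def v_def .
    then show ?thesis
      using False by (simp only: cell(5,6) if_False)
  qed
qed

lemma sum_telescope_inverse_powr_le:
  fixes a h :: real
  assumes "1 \<le> n"
  shows "(\<Sum>i=1..<n. 1 / (real i * h) powr a - 1 / (real (Suc i) * h) powr a) \<le> 1 / h powr a"
proof -
  have "(\<Sum>i=1..<n. 1 / (real i * h) powr a - 1 / (real (Suc i) * h) powr a)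
          = 1 / h powr a - 1 / (real n * h) powr a"
    using sum_Suc_diff'[OF assms, of "\<lambda>i. 1 / (real i * h) powr a"] unfolding sum_subtractf by simp
  then show ?thesis
    by simp
qed

lemma l1_quadrature_error:
  fixes a h x L :: real and y y1 :: "real \<Rightarrow> real" and n :: nat
  assumes a: "0 < a" "a < 1" and h: "0 < h" and n: "1 \<le> n" and x: "x = real n * h"
    and deriv: "\<And>t. t \<in> {0..x} \<Longrightarrow> (y has_real_derivative y1 t) (at t within {0..x})"
    and lip: "\<And>s t. s \<in> {0..x} \<Longrightarrow> t \<in> {0..x} \<Longrightarrow> \<bar>y1 s - y1 t\<bar> \<le> L * \<bar>s - t\<bar>"
  shows "\<bar>(\<Sum>i<n. (y (x - real i * h) - y (x - real (Suc i) * h)) / h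
              * (h powr (1 - a) * (real (Suc i) powr (1 - a) - real i powr (1 - a)) / (1 - a)))
          - integral {0..x} (\<lambda>t. y1 t / (x - t) powr a)\<bar>
         \<le> L * (1 + 1 / (1 - a)) * h powr (2 - a)"
proof -
  define g where "g = (\<lambda>t. y1 t / (x - t) powr a)"
  define \<phi> where "\<phi> i = 1 / (real i * h) powr a" for i
  define E where "E i = (y (x - real i * h) - y (x - real (Suc i) * h)) / h
                          * (h powr (1 - a) * (real (Suc i) powr (1 - a) - real i powr (1 - a)) / (1 - a))
                        - integral {x - real (Suc i) * h..x - real i * h} g" for i
  have x0: "0 < x"
    using x h n by simp
  have "0 \<le> L * \<bar>0 - x\<bar>"
    by (rule order_trans[OF abs_ge_zero lip]) (use x0 in auto)
  then have L: "0 \<le> L"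
    using x0 by (simp add: zero_le_mult_iff)
  have "continuous_on {0..x} y1"
    using lip L by (intro lipschitz_on_continuous_on[of L] lipschitz_onI) (auto simp: dist_real_def)
  then have int: "g integrable_on {0..x}"
    unfolding g_def using integrable_on_div_powr_kernel[of a x y1] a x0 by simp
  have E: "\<bar>E i\<bar> \<le> (if i = 0 then L * h powr (2 - a) / (1 - a) else L * h ^ 2 * (\<phi> i - \<phi> (Suc i)))"
    if "i < n" for i
  proof -
    have "real (Suc i) * h \<le> x"
      using that h by (simp add: x mult_right_mono del: of_nat_Suc)
    from l1_cell_error[OF a h this deriv lip int[unfolded g_def]] show ?thesis
      unfolding E_def g_def \<phi>_def .
  qed
  have "(\<Sum>i=1..<n. L * h ^ 2 * (\<phi> i - \<phi> (Suc i))) \<le> L * h ^ 2 * (1 / h powr a)"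
    unfolding sum_distrib_left[symmetric] \<phi>_def
    using sum_telescope_inverse_powr_le[OF n] L by (intro mult_left_mono) auto
  moreover have "h ^ 2 * (1 / h powr a) = h powr (2 - a)"
    using h by (simp add: powr_diff powr_realpow)
  ultimately have tele: "(\<Sum>i=1..<n. L * h ^ 2 * (\<phi> i - \<phi> (Suc i))) \<le> L * h powr (2 - a)"
    by (metis mult.assoc)
  have "integral {0..x} g = (\<Sum>i<n. integral {x - real (Suc i) * h..x - real i * h} g)"
    using integral_uniform_cells[of g x n h] int h by (simp add: x)
  then have "(\<Sum>i<n. (y (x - real i * h) - y (x - real (Suc i) * h)) / h
                * (h powr (1 - a) * (real (Suc i) powr (1 - a) - real i powr (1 - a)) / (1 - a)))
               - integral {0..x} g = (\<Sum>i<n. E i)"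
    by (simp add: E_def sum_subtractf)
  also have "\<bar>\<dots>\<bar> \<le> \<bar>E 0\<bar> + (\<Sum>i=1..<n. \<bar>E i\<bar>)"
  proof -
    have "{..<n} = insert 0 {1..<n}"
      using n by auto
    then show ?thesis
      using sum_abs[of E "{..<n}"] by simp
  qed
  also have "\<dots> \<le> L * h powr (2 - a) / (1 - a) + (\<Sum>i=1..<n. L * h ^ 2 * (\<phi> i - \<phi> (Suc i)))"
  proof (intro add_mono sum_mono)
    show "\<bar>E 0\<bar> \<le> L * h powr (2 - a) / (1 - a)"
      using E[of 0] n by simp
    fix i
    assume "i \<in> {1..<n}"
    then show "\<bar>E i\<bar> \<le> L * h ^ 2 * (\<phi> i - \<phi> (Suc i))"
      using E[of i] by simp
  qed
  also have "\<dots> \<le> L * h powr (2 - a) / (1 - a) + L * h powr (2 - a)"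
    using tele by (rule add_left_mono)
  also have "L * h powr (2 - a) / (1 - a) + L * h powr (2 - a) = L * (1 + 1 / (1 - a)) * h powr (2 - a)"
    by (simp add: algebra_simps)
  finally show ?thesis
    unfolding g_def .
qed

lemma l1_scheme_error:
  fixes a h x L :: real and y y1 :: "real \<Rightarrow> real" and n :: nat
  assumes a: "0 < a" "a < 1" and h: "0 < h" and n: "1 \<le> n" and x: "x = real n * h"
    and deriv: "\<And>t. t \<in> {0..x} \<Longrightarrow> (y has_real_derivative y1 t) (at t within {0..x})"
    and lip: "\<And>s t. s \<in> {0..x} \<Longrightarrow> t \<in> {0..x} \<Longrightarrow> \<bar>y1 s - y1 t\<bar> \<le> L * \<bar>s - t\<bar>"
  shows "\<bar>1 / h powr a * (\<Sum>k=0..n. l1_weight a n k * y (real (n - k) * h)) - caputo a y1 x\<bar>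
           \<le> L * (1 + 1 / (1 - a)) / Gamma (1 - a) * h powr (2 - a)"
proof -
  note G = Gamma_shift_identities[OF a]
  define z where "z k = y (real (n - k) * h)" for k
  define Q where "Q = (\<Sum>i<n. (y (x - real i * h) - y (x - real (Suc i) * h)) / h
                          * (h powr (1 - a) * (real (Suc i) powr (1 - a) - real i powr (1 - a)) / (1 - a)))"
  define I where "I = integral {0..x} (\<lambda>t. y1 t / (x - t) powr a)"
  have yz: "y (x - real i * h) = z i" "y (x - real (Suc i) * h) = z (Suc i)" if "i < n" for i
    using that by (simp_all add: z_def x of_nat_diff algebra_simps)
  define S where "S = (\<Sum>i<n. (real (Suc i) powr (1 - a) - real i powr (1 - a)) * (z i - z (Suc i)))"
  have "Q = (\<Sum>i<n. (z i - z (Suc i)) / h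
                * (h powr (1 - a) * (real (Suc i) powr (1 - a) - real i powr (1 - a)) / (1 - a)))"
    unfolding Q_def by (intro sum.cong refl) (simp only: yz lessThan_iff)
  also have "\<dots> = S * (h powr (1 - a) / h) / (1 - a)"
    unfolding S_def sum_distrib_right sum_divide_distrib
    by (intro sum.cong refl) (use h a in \<open>simp add: field_simps\<close>)
  also have "h powr (1 - a) / h = 1 / h powr a"
    using h by (simp add: powr_diff)
  finally have "Q = S / h powr a / (1 - a)"
    by simp
  then have "1 / h powr a * (\<Sum>k=0..n. l1_weight a n k * z k) = Q / Gamma (1 - a)"
    unfolding sum_l1_weight[OF n] S_def[symmetric] G(1) by simp
  moreover have "caputo a y1 x = I / Gamma (1 - a)"
    by (simp add: caputo_def I_def)
  moreover have "\<bar>Q - I\<bar> \<le> L * (1 + 1 / (1 - a)) * h powr (2 - a)"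
    unfolding Q_def I_def by (rule l1_quadrature_error[OF a h n x deriv lip])
  ultimately show ?thesis
    using G(3) by (simp add: z_def abs_divide divide_right_mono flip: diff_divide_distrib)
qed

lemma sigma_bar_scheme_error:
  fixes a :: real
  assumes "0 < a" "a < 1"
  obtains C where
    "\<And>N n h L M y y1. 2 \<le> N \<Longrightarrow> 1 \<le> n \<Longrightarrow> n \<le> N \<Longrightarrow> 0 < h \<Longrightarrow>
       (\<And>t. t \<in> {0..real n * h} \<Longrightarrow> (y has_real_derivative y1 t) (at t within {0..real n * h})) \<Longrightarrow>
       (\<And>s t. s \<in> {0..real n * h} \<Longrightarrow> t \<in> {0..real n * h} \<Longrightarrow> \<bar>y1 s - y1 t\<bar> \<le> L * \<bar>s - t\<bar>) \<Longrightarrow>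
       (\<And>t. t \<in> {0..real n * h} \<Longrightarrow> \<bar>y t\<bar> \<le> M) \<Longrightarrow>
       \<bar>1 / h powr a * (\<Sum>k=0..n. sigma_bar a N n k * y (real (n - k) * h)) - caputo a y1 (real n * h)\<bar>
         \<le> (C * M * (1 / (real N * h) ^ 2 + 1 / (real n * h) ^ 2) + L * (1 + 1 / (1 - a)) / Gamma (1 - a))
            * h powr (2 - a)"
proof -
  obtain C where C: "0 \<le> C"
    "\<And>N n z M. 2 \<le> N \<Longrightarrow> 1 \<le> n \<Longrightarrow> n \<le> N \<Longrightarrow> (\<And>k. k \<le> n \<Longrightarrow> \<bar>z k\<bar> \<le> M) \<Longrightarrow>
       \<bar>\<Sum>k=0..n. (sigma_bar a N n k - l1_weight a n k) * z k\<bar> \<le> C * M * (1 / real N ^ 2 + 1 / real n ^ 2)"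
    using sum_sigma_bar_minus_l1_weight_le[OF assms] by blast
  show ?thesis
  proof (rule that)
    fix N n :: nat and h L M :: real and y y1 :: "real \<Rightarrow> real"
    assume N: "2 \<le> N" and n: "1 \<le> n" "n \<le> N" and h: "0 < h"
      and deriv: "\<And>t. t \<in> {0..real n * h} \<Longrightarrow> (y has_real_derivative y1 t) (at t within {0..real n * h})"
      and lip: "\<And>s t. s \<in> {0..real n * h} \<Longrightarrow> t \<in> {0..real n * h} \<Longrightarrow> \<bar>y1 s - y1 t\<bar> \<le> L * \<bar>s - t\<bar>"
      and M: "\<And>t. t \<in> {0..real n * h} \<Longrightarrow> \<bar>y t\<bar> \<le> M"
    define z where "z k = y (real (n - k) * h)" for k
    define D where "D = 1 / h powr a * (\<Sum>k=0..n. (sigma_bar a N n k - l1_weight a n k) * z k)"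
    define B where "B = 1 / h powr a * (\<Sum>k=0..n. l1_weight a n k * z k)"
    have "\<bar>z k\<bar> \<le> M" if "k \<le> n" for k
      using h that by (auto simp: z_def intro!: M mult_right_mono)
    then have "\<bar>\<Sum>k=0..n. (sigma_bar a N n k - l1_weight a n k) * z k\<bar> \<le> C * M * (1 / real N ^ 2 + 1 / real n ^ 2)"
      by (rule C(2)[OF N n])
    then have "\<bar>D\<bar> \<le> 1 / h powr a * (C * M * (1 / real N ^ 2 + 1 / real n ^ 2))"
      using h by (simp add: D_def abs_mult divide_right_mono)
    also have "\<dots> = C * M * (1 / (real N * h) ^ 2 + 1 / (real n * h) ^ 2) * (h ^ 2 / h powr a)"
      using h by (simp add: field_simps)
    also have "h ^ 2 / h powr a = h powr (2 - a)"
      using h by (simp add: powr_diff powr_realpow)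
    finally have D: "\<bar>D\<bar> \<le> C * M * (1 / (real N * h) ^ 2 + 1 / (real n * h) ^ 2) * h powr (2 - a)" .
    have B: "\<bar>B - caputo a y1 (real n * h)\<bar> \<le> L * (1 + 1 / (1 - a)) / Gamma (1 - a) * h powr (2 - a)"
      unfolding B_def z_def by (rule l1_scheme_error[OF assms h n(1) refl deriv lip])
    have "1 / h powr a * (\<Sum>k=0..n. sigma_bar a N n k * z k) = D + B"
      by (simp add: D_def B_def sum_subtractf left_diff_distrib diff_divide_distrib)
    then show "\<bar>1 / h powr a * (\<Sum>k=0..n. sigma_bar a N n k * y (real (n - k) * h)) - caputo a y1 (real n * h)\<bar>
         \<le> (C * M * (1 / (real N * h) ^ 2 + 1 / (real n * h) ^ 2) + L * (1 + 1 / (1 - a)) / Gamma (1 - a))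
            * h powr (2 - a)"
      using abs_triangle_ineq[of D "B - caputo a y1 (real n * h)"] D B
      unfolding z_def distrib_right by linarith
  qed
qed

lemma grid_index_bounds:
  fixes T x :: real and N n :: nat
  assumes "0 < x" "x \<le> T" "real n * (T / real N) = x"
  shows "1 \<le> n" "n \<le> N"
proof -
  have N: "N \<noteq> 0"
  proof
    assume "N = 0"
    with assms show False
      by simp
  qed
  then have h: "0 < T / real N"
    using assms by simp
  have "real N * (T / real N) = T"
    using N by simp
  then have "real n * (T / real N) \<le> real N * (T / real N)"
    using assms by simp
  then have "real n \<le> real N"
    using h by (rule mult_right_le_imp_le)
  then show "n \<le> N"
    by simp
  show "1 \<le> n"
    using assms by (cases n) auto
qed

lemma continuous_on_Icc_abs_bound:
  fixes f :: "real \<Rightarrow> real"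
  assumes "continuous_on {a..b} f"
  obtains M where "\<And>t. t \<in> {a..b} \<Longrightarrow> \<bar>f t\<bar> \<le> M"
  using compact_imp_bounded[OF compact_continuous_image[OF assms compact_Icc]]
  by (force simp: bounded_iff)

theorem mainTheorem10:
  fixes \<alpha> T x :: real and y y1 y2 :: "real \<Rightarrow> real"
  assumes "0 < \<alpha>" "\<alpha> < 1" "0 < T" "0 < x" "x \<le> T"
    and "\<And>t. t \<in> {0..T} \<Longrightarrow> (y has_real_derivative y1 t) (at t within {0..T})"
    and "\<And>t. t \<in> {0..T} \<Longrightarrow> (y1 has_real_derivative y2 t) (at t within {0..T})"
    and "continuous_on {0..T} y2"
  shows "\<exists>C h0. 0 < h0 \<and> (\<forall>N n::nat. 2 \<le> N \<longrightarrow> real n * (T / real N) = x \<longrightarrow> T / real N < h0 \<longrightarrow>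
           \<bar>(1 / (T / real N) powr \<alpha>) * (\<Sum>k=0..n. sigma_bar \<alpha> N n k * y (real (n - k) * (T / real N)))
              - caputo \<alpha> y1 x\<bar> \<le> C * (T / real N) powr (2 - \<alpha>))"
proof -
  obtain M0 where M0: "\<And>t. t \<in> {0..T} \<Longrightarrow> \<bar>y t\<bar> \<le> M0"
    using continuous_on_Icc_abs_bound[OF DERIV_continuous_on[OF assms(6)]] by blast
  obtain M2 where M2: "\<And>t. t \<in> {0..T} \<Longrightarrow> \<bar>y2 t\<bar> \<le> M2"
    using continuous_on_Icc_abs_bound[OF assms(8)] by blast
  have deriv: "(y has_real_derivative y1 t) (at t within {0..x})" if "t \<in> {0..x}" for t
    using has_field_derivative_subset[OF assms(6)] assms(5) that by auto
  have lip: "\<bar>y1 s - y1 t\<bar> \<le> M2 * \<bar>s - t\<bar>" if "s \<in> {0..x}" "t \<in> {0..x}" for s t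
    using field_differentiable_bound[of "{0..T}" y1 y2 M2] assms(5,7) M2 that by auto
  have bound: "\<bar>y t\<bar> \<le> M0" if "t \<in> {0..x}" for t
    using M0 assms(5) that by auto
  obtain C where C:
    "\<And>N n h L M y y1. 2 \<le> N \<Longrightarrow> 1 \<le> n \<Longrightarrow> n \<le> N \<Longrightarrow> 0 < h \<Longrightarrow>
       (\<And>t. t \<in> {0..real n * h} \<Longrightarrow> (y has_real_derivative y1 t) (at t within {0..real n * h})) \<Longrightarrow>
       (\<And>s t. s \<in> {0..real n * h} \<Longrightarrow> t \<in> {0..real n * h} \<Longrightarrow> \<bar>y1 s - y1 t\<bar> \<le> L * \<bar>s - t\<bar>) \<Longrightarrow>
       (\<And>t. t \<in> {0..real n * h} \<Longrightarrow> \<bar>y t\<bar> \<le> M) \<Longrightarrow>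
       \<bar>1 / h powr \<alpha> * (\<Sum>k=0..n. sigma_bar \<alpha> N n k * y (real (n - k) * h)) - caputo \<alpha> y1 (real n * h)\<bar>
         \<le> (C * M * (1 / (real N * h) ^ 2 + 1 / (real n * h) ^ 2) + L * (1 + 1 / (1 - \<alpha>)) / Gamma (1 - \<alpha>))
            * h powr (2 - \<alpha>)"
    using sigma_bar_scheme_error[OF assms(1,2)] by blast
  \<comment> \<open>The estimate holds for every \<open>N \<ge> 2\<close>, so any \<open>h0\<close> will do.\<close>
  show ?thesis
  proof (rule exI[of _ "C * M0 * (1 / T ^ 2 + 1 / x ^ 2) + M2 * (1 + 1 / (1 - \<alpha>)) / Gamma (1 - \<alpha>)"],
      rule exI[of _ 1], intro conjI allI impI)
    fix N n :: nat
    assume N: "2 \<le> N" and nx: "real n * (T / real N) = x"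
    have "0 < T / real N" "real N * (T / real N) = T"
      using N assms(3) by auto
    from C[OF N grid_index_bounds[OF assms(4,5) nx] this(1), unfolded nx this(2)] deriv lip bound
    show "\<bar>1 / (T / real N) powr \<alpha> * (\<Sum>k=0..n. sigma_bar \<alpha> N n k * y (real (n - k) * (T / real N)))
            - caputo \<alpha> y1 x\<bar>
          \<le> (C * M0 * (1 / T ^ 2 + 1 / x ^ 2) + M2 * (1 + 1 / (1 - \<alpha>)) / Gamma (1 - \<alpha>)) * (T / real N) powr (2 - \<alpha>)"
      by blast
  qed simp
qed

end
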